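(* For a word $u$ of length $n$, the longest left-seed array $\mathsf{LSeed}^M[1..n]$, where $\mathsf{LSeed}^M[i]=\mathrm{lseedmax}(u[1..i])$, can be computed in $O(n)$ time.
   Context: Words are over a finite alphabet; $u[1..i]$ is the prefix of length $i$. A word $s$ covers $w$ if every position of $w$ lies in some occurrence of $s$ in $w$. A seed of $x$ is a factor $s$ of $x$ such that $x$ is a factor of some word covered by $s$; a left seed is a seed that is a prefix of $x$. $\mathrm{lseedmax}(x)$ is the length of the longest left seed of $x$ shorter than $x$, or $0$ if there is none. *)

theory Defs
  imports Main "HOL-Library.Sublist"
begin

text \<open>Words are lists; positions are 0-based internally. s occurs in w at position i.\<close>
definition occurs_at :: "'a list \<Rightarrow> 'a list \<Rightarrow> nat \<Rightarrow> bool" where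
  "occurs_at s w i \<longleftrightarrow> i + length s \<le> length w \<and> take (length s) (drop i w) = s"

definition covers :: "'a list \<Rightarrow> 'a list \<Rightarrow> bool" where
  "covers s w \<longleftrightarrow> (\<forall>j < length w. \<exists>i. occurs_at s w i \<and> i \<le> j \<and> j < i + length s)"

definition is_seed :: "'a list \<Rightarrow> 'a list \<Rightarrow> bool" where
  "is_seed s x \<longleftrightarrow> sublist s x \<and> (\<exists>y. covers s y \<and> sublist x y)"

definition is_left_seed :: "'a list \<Rightarrow> 'a list \<Rightarrow> bool" where
  "is_left_seed s x \<longleftrightarrow> is_seed s x \<and> prefix s x"

definition lseedmax :: "'a list \<Rightarrow> nat" where
  "lseedmax x = (if \<exists>s. is_left_seed s x \<and> length s < length x
                 then Max {length s | s. is_left_seed s x \<and> length s < length x}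
                 else 0)"

text \<open>The longest left-seed array: entry i (1-based, 1 \<le> i \<le> n) is lseedmax (u[1..i]).\<close>
definition LSeed :: "'a list \<Rightarrow> nat \<Rightarrow> nat" where
  "LSeed u i = lseedmax (take i u)"

text \<open>Registers and memory cells hold natural numbers; each instruction costs one step.
  No multiplication/division, so large numbers cannot be exploited for parallelism.\<close>
datatype instr =
    LoadC nat nat
  | Add nat nat nat
  | Sub nat nat nat
  | Load nat nat
  | Store nat nat
  | Jz nat nat
  | Halt

record config =
  pc :: nat
  regs :: "nat \<Rightarrow> nat"
  mem :: "nat \<Rightarrow> nat"

definition halted :: "instr list \<Rightarrow> config \<Rightarrow> bool" where
  "halted P c \<longleftrightarrow> pc c \<ge> length P \<or> P ! pc c = Halt"

fun exec_instr :: "instr \<Rightarrow> config \<Rightarrow> config" where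
  "exec_instr (LoadC r k) c = c\<lparr>pc := Suc (pc c), regs := (regs c)(r := k)\<rparr>"
| "exec_instr (Add r a b) c = c\<lparr>pc := Suc (pc c), regs := (regs c)(r := regs c a + regs c b)\<rparr>"
| "exec_instr (Sub r a b) c = c\<lparr>pc := Suc (pc c), regs := (regs c)(r := regs c a - regs c b)\<rparr>"
| "exec_instr (Load r a) c = c\<lparr>pc := Suc (pc c), regs := (regs c)(r := mem c (regs c a))\<rparr>"
| "exec_instr (Store a b) c = c\<lparr>pc := Suc (pc c), mem := (mem c)(regs c a := regs c b)\<rparr>"
| "exec_instr (Jz r l) c = c\<lparr>pc := (if regs c r = 0 then l else Suc (pc c))\<rparr>"
| "exec_instr Halt c = c"

definition step :: "instr list \<Rightarrow> config \<Rightarrow> config" where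
  "step P c = (if halted P c then c else exec_instr (P ! pc c) c)"

definition run :: "instr list \<Rightarrow> nat \<Rightarrow> config \<Rightarrow> config" where
  "run P k c = (step P ^^ k) c"

definition init_config :: "nat list \<Rightarrow> config" where
  "init_config u = \<lparr>pc = 0, regs = (\<lambda>_. 0),
     mem = (\<lambda>a. if a = 0 then length u else if a \<le> length u then u ! (a - 1) else 0)\<rparr>"

end

theory Submission
  imports Defs
begin

(* A left seed s of x with |s| < |x| is a proper prefix of x, and the occurrence of s that covers
   the last letter of x (inside a word covered by s) starts strictly inside x, so x has a nonempty
   proper border. Conversely, a border of length b gives x the period p = |x| - b, and x[1..|x|-1]
   covers the p-periodic word of length p + |x| - 1, which begins with x. Hence LSeed u i is i - 1
   if u[1..i] is bordered and 0 otherwise, which is read off the KMP failure function (the longest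
   proper border of every prefix). A unit-cost RAM computes that function in linear time by the
   usual amortisation, and converts it in a second linear pass. *)

definition is_border :: "'a list \<Rightarrow> nat \<Rightarrow> nat \<Rightarrow> bool" where
  "is_border u i b \<longleftrightarrow> b < i \<and> (\<forall>t<b. u!t = u!(i - b + t))"

definition bordered :: "'a list \<Rightarrow> bool" where
  "bordered x \<longleftrightarrow> (\<exists>b>0. is_border x (length x) b)"

lemma occurs_at_nth:
  assumes "occurs_at s y q" "t < length s"
  shows "y!(q + t) = s!t"
  using assms by (metis le_add1 nth_drop nth_take occurs_at_def order_trans)

lemma covers_by_two_occurrences:
  assumes "occurs_at s y 0" "occurs_at s y p" "p \<le> length s" "length y = p + length s"
  shows "covers s y"
  unfolding covers_def
proof (intro allI impI)
  fix j assume "j < length y"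
  show "\<exists>i. occurs_at s y i \<and> i \<le> j \<and> j < i + length s"
  proof (cases "j < length s")
    case True then show ?thesis using assms(1) by auto
  next
    case False then show ?thesis using assms(2-4) \<open>j < length y\<close> by (intro exI[of _ p]) auto
  qed
qed

lemma left_seed_imp_bordered:
  assumes ls: "is_left_seed s x" and shorter: "length s < length x"
  shows "bordered x"
proof -
  from ls have pre: "prefix s x" and "is_seed s x" by (auto simp: is_left_seed_def)
  then obtain y where cov: "covers s y" and "sublist x y" by (auto simp: is_seed_def)
  then obtain a c where y: "y = a @ x @ c" by (auto simp: sublist_def)
  define j where "j = length a + length x - 1"
  have "j < length y" using shorter y j_def by auto
  then obtain q where occ: "occurs_at s y q" and "q \<le> j" and "j < q + length s"
    using cov unfolding covers_def by blast
  \<comment> \<open>the occurrence of s covering the last letter of x starts strictly inside x\<close>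
  then have q: "length a < q" "q < length a + length x" using shorter j_def by linarith+
  define b where "b = length a + length x - q"
  have "is_border x (length x) b"
    unfolding is_border_def
  proof (intro conjI allI impI)
    show "b < length x" using q b_def by linarith
    fix t assume "t < b"
    then have t: "t < length s" "length x - b + t < length x"
      using \<open>j < q + length s\<close> j_def b_def q by linarith+
    have "x!(length x - b + t) = y!(q + t)" using y t(2) q b_def by (simp add: nth_append)
    also have "\<dots> = s!t" using occurs_at_nth[OF occ t(1)] .
    also have "\<dots> = x!t" using pre t(1) by (metis prefix_def nth_append)
    finally show "x!t = x!(length x - b + t)" by simp
  qed
  moreover have "0 < b" using q b_def by linarith
  ultimately show ?thesis unfolding bordered_def by blast
qed

lemma border_imp_periodic:
  assumes "is_border x (length x) b" "t < length x"
  shows "x!t = x!(t mod (length x - b))"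
  using assms(2)
proof (induction t rule: less_induct)
  case (less t)
  define p where "p = length x - b"
  have "0 < p" using assms(1) p_def by (simp add: is_border_def)
  show ?case
  proof (cases "t < p")
    case True then show ?thesis using p_def by simp
  next
    case False
    then have "x!(t - p) = x!t" using assms(1) less.prems p_def unfolding is_border_def
      by (metis add_diff_inverse_nat diff_diff_cancel diff_less_mono less_imp_le_nat not_less)
    moreover have "(t - p) mod p = t mod p" using False by (metis le_add_diff_inverse2 mod_add_self2 not_less)
    ultimately show ?thesis using less.IH[of "t - p"] less.prems False \<open>0 < p\<close> p_def by simp
  qed
qed

lemma bordered_imp_left_seed_butlast:
  assumes "bordered x"
  shows "is_left_seed (butlast x) x"
proof -
  obtain b where "0 < b" and bx: "is_border x (length x) b"
    using assms unfolding bordered_def by blast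
  define p where "p = length x - b"
  define s where "s = butlast x"
  \<comment> \<open>x is a factor of its periodic extension of length p + |s|, which s covers\<close>
  define y where "y = map (\<lambda>t. x!(t mod p)) [0..<p + length s]"
  have bl: "b < length x" and "0 < p" using bx p_def by (auto simp: is_border_def)
  have ls: "length s = length x - 1" and "p \<le> length s" using s_def p_def \<open>0 < b\<close> bl by auto
  have y_nth: "y!t = x!(t mod p)" if "t < p + length s" for t using that by (simp add: y_def)
  have x_prefix: "take (length x) y = x"
    by (rule nth_equalityI)
      (use ls \<open>0 < p\<close> y_nth border_imp_periodic[OF bx] in \<open>auto simp: y_def p_def\<close>)
  have s_nth: "s!t = x!(t mod p)" if "t < length s" for t
    using that ls border_imp_periodic[OF bx, of t] s_def p_def by (simp add: nth_butlast)
  have "occurs_at s y 0" "occurs_at s y p"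
    unfolding occurs_at_def by (auto simp: y_def s_nth intro!: nth_equalityI)
  then have "covers s y"
    by (rule covers_by_two_occurrences) (use \<open>p \<le> length s\<close> in \<open>auto simp: y_def\<close>)
  moreover have "sublist x y" using x_prefix by (metis append_take_drop_id sublist_append_rightI)
  ultimately show ?thesis
    unfolding is_left_seed_def is_seed_def s_def by (auto simp: prefixeq_butlast)
qed

lemma lseedmax_eq: "lseedmax x = (if bordered x then length x - 1 else 0)"
proof (cases "bordered x")
  case True
  let ?S = "{length s |s. is_left_seed s x \<and> length s < length x}"
  have "length x \<ge> 2" using True unfolding bordered_def is_border_def by auto
  then have "length x - 1 \<in> ?S"
    using bordered_imp_left_seed_butlast[OF True] by (intro CollectI exI[of _ "butlast x"]) auto
  moreover have "Max ?S = length x - 1"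
    by (rule Max_eqI)
      (use \<open>length x - 1 \<in> ?S\<close> in \<open>auto intro: finite_subset[of _ "{..<length x}"]\<close>)
  ultimately show ?thesis using True unfolding lseedmax_def by auto
next
  case False
  then show ?thesis using left_seed_imp_bordered unfolding lseedmax_def by auto
qed

definition longest_border :: "'a list \<Rightarrow> nat \<Rightarrow> nat" where
  "longest_border u i = (GREATEST b. is_border u i b)"

lemma longest_border_is_border: "0 < i \<Longrightarrow> is_border u i (longest_border u i)"
  unfolding longest_border_def by (rule GreatestI_nat[of _ 0 i]) (auto simp: is_border_def)

lemma longest_border_greatest: "is_border u i b \<Longrightarrow> b \<le> longest_border u i"
  unfolding longest_border_def by (rule Greatest_le_nat[of _ b i]) (auto simp: is_border_def)

lemma longest_border_less: "0 < i \<Longrightarrow> longest_border u i < i"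
  using longest_border_is_border[of i u] by (simp add: is_border_def)

lemma is_border_Suc_iff: "is_border u (Suc i) (Suc b) \<longleftrightarrow> is_border u i b \<and> u!b = u!i"
  unfolding is_border_def by (auto simp: less_Suc_eq)

lemma is_border_of_border_iff:
  assumes k: "is_border u i k" and "b < k"
  shows "is_border u i b \<longleftrightarrow> is_border u k b"
proof -
  have "u!(k - b + t) = u!(i - b + t)" if "t < b" for t
  proof -
    have "k - b + t < k" "i - k + (k - b + t) = i - b + t" using that \<open>b < k\<close> k
      by (auto simp: is_border_def)
    then show ?thesis using k unfolding is_border_def by metis
  qed
  then show ?thesis using assms unfolding is_border_def by auto
qed

text \<open>Invariant of the KMP inner loop at position i.\<close>
definition kmp_candidate :: "'a list \<Rightarrow> nat \<Rightarrow> nat \<Rightarrow> bool" where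
  "kmp_candidate u i k \<longleftrightarrow>
     is_border u i k \<and> (\<forall>b. is_border u i b \<and> k < b \<longrightarrow> u!b \<noteq> u!i)"

lemma kmp_candidate_longest_border: "0 < i \<Longrightarrow> kmp_candidate u i (longest_border u i)"
  unfolding kmp_candidate_def using longest_border_is_border longest_border_greatest by (meson not_le)

lemma kmp_candidate_fallback:
  assumes cand: "kmp_candidate u i k" and "0 < k" and mismatch: "u!k \<noteq> u!i"
  shows "kmp_candidate u i (longest_border u k)"
proof -
  have k: "is_border u i k" using cand by (simp add: kmp_candidate_def)
  have less: "longest_border u k < k" using longest_border_less \<open>0 < k\<close> by blast
  have "is_border u i (longest_border u k)"
    using is_border_of_border_iff[OF k less] longest_border_is_border[OF \<open>0 < k\<close>] by simp
  moreover have "u!b \<noteq> u!i" if "is_border u i b" "longest_border u k < b" for b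
  proof -
    consider "k < b" | "b = k" | "b < k" by linarith
    then show ?thesis
    proof cases
      case 3
      then have "is_border u k b" using is_border_of_border_iff[OF k] that(1) by simp
      then show ?thesis using longest_border_greatest[of u k b] that(2) by simp
    qed (use cand that mismatch in \<open>auto simp: kmp_candidate_def\<close>)
  qed
  ultimately show ?thesis by (simp add: kmp_candidate_def)
qed

lemma longest_border_Suc_match:
  assumes cand: "kmp_candidate u i k" and "u!k = u!i"
  shows "longest_border u (Suc i) = Suc k"
proof (rule antisym)
  show "longest_border u (Suc i) \<le> Suc k"
  proof (rule ccontr)
    assume "\<not> longest_border u (Suc i) \<le> Suc k"
    then obtain b where b: "longest_border u (Suc i) = Suc b" "k < b"
      by (cases "longest_border u (Suc i)") auto
    then have "is_border u i b" "u!b = u!i"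
      using longest_border_is_border[of "Suc i" u] is_border_Suc_iff by auto
    then show False using cand b(2) by (simp add: kmp_candidate_def)
  qed
  show "Suc k \<le> longest_border u (Suc i)"
    using cand assms(2) is_border_Suc_iff longest_border_greatest by (metis kmp_candidate_def)
qed

lemma longest_border_Suc_mismatch:
  assumes cand: "kmp_candidate u i 0" and "u!0 \<noteq> u!i"
  shows "longest_border u (Suc i) = 0"
proof (rule ccontr)
  assume "longest_border u (Suc i) \<noteq> 0"
  then obtain b where "longest_border u (Suc i) = Suc b" by (cases "longest_border u (Suc i)") auto
  then have "is_border u i b" "u!b = u!i"
    using longest_border_is_border[of "Suc i" u] is_border_Suc_iff by auto
  then show False using cand assms(2) by (cases b) (auto simp: kmp_candidate_def)
qed

lemma bordered_take_iff:
  assumes "0 < i" "i \<le> length u"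
  shows "bordered (take i u) \<longleftrightarrow> 0 < longest_border u i"
proof
  assume "bordered (take i u)"
  then obtain b where "0 < b" "is_border u i b"
    unfolding bordered_def is_border_def using assms by auto
  then show "0 < longest_border u i" using longest_border_greatest[of u i b] by simp
next
  assume "0 < longest_border u i"
  then show "bordered (take i u)"
    using longest_border_is_border[OF assms(1), of u] assms unfolding bordered_def is_border_def by auto
qed

lemma LSeed_eq_longest_border:
  assumes "0 < i" "i \<le> length u"
  shows "LSeed u i = (if longest_border u i = 0 then 0 else i - 1)"
  unfolding LSeed_def lseedmax_eq bordered_take_iff[OF assms] using assms by auto

text \<open>Registers: R0 = 0 (so Jz 0 l is a jump), R1 = n, R8 = 1, R2 = i, R3 = k, the current candidate
  border, and R4 to R7 scratch. Instructions 0 to 8 initialise (halting at once if n = 0),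
  9 to 27 are the KMP loop storing longest_border u i in M[n + i], with the inner loop at 13
  comparing u!k with u!i, and 28 to 37 overwrite M[n + i] by LSeed u i.\<close>
definition lseed_prog :: "instr list" where
  "lseed_prog = [LoadC 9 0,
    Load 1 9,
    Jz 1 38,
    LoadC 8 1,
    Add 4 1 8,
    LoadC 5 0,
    Store 4 5,
    LoadC 2 1,
    LoadC 3 0,
    Sub 4 1 2,
    Jz 4 28,
    Add 4 2 8,
    Load 5 4,
    Add 4 3 8,
    Load 6 4,
    Sub 7 5 6,
    Sub 4 6 5,
    Add 7 7 4,
    Jz 7 23,
    Jz 3 24,
    Add 4 1 3,
    Load 3 4,
    Jz 0 13,
    Add 3 3 8,
    Add 2 2 8,
    Add 4 1 2,
    Store 4 3,
    Jz 0 9,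
    LoadC 2 1,
    Add 4 1 2,
    Load 5 4,
    Jz 5 34,
    Sub 6 2 8,
    Store 4 6,
    Sub 6 1 2,
    Jz 6 38,
    Add 2 2 8,
    Jz 0 29,
    Halt]"

lemma run_0: "run P 0 c = c"
  by (simp add: run_def)

lemma run_Suc: "run P (Suc k) c = run P k (step P c)"
  unfolding run_def funpow_Suc_right by simp

lemma run_1: "run P 1 c = step P c"
  by (simp add: run_def)

lemma run_numeral: "run P (numeral n) c = run P (pred_numeral n) (step P c)"
  by (simp only: numeral_eq_Suc run_Suc)

lemma run_add: "run P (a + b) c = run P b (run P a c)"
  by (simp add: run_def funpow_add add.commute[of a b])

lemmas run_unfold = run_0 run_Suc run_numeral pred_numeral_simps BitM.simps numeral_One run_1

text \<open>Having only monus, the program tests a = b as (a - b) + (b - a) = 0.\<close>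
lemma nat_diff_add_diff_eq_0_iff: "(a::nat) - b + (b - a) = 0 \<longleftrightarrow> a = b"
  by auto

lemma lseed_prog_length: "length lseed_prog = 39"
  by (simp add: lseed_prog_def)

text \<open>An instruction table rather than the list literal keeps symbolic execution fast; since simp
  normalises 1 to Suc 0 and leaves Suc (Suc 0) alone, pc 1 is written Suc 0 here and
  exec_simps folds Suc (Suc 0) back to 2.\<close>
lemma lseed_prog_nth:
  "lseed_prog ! 0 = LoadC 9 0"
  "lseed_prog ! Suc 0 = Load 1 9"
  "lseed_prog ! 2 = Jz 1 38"
  "lseed_prog ! 3 = LoadC 8 1"
  "lseed_prog ! 4 = Add 4 1 8"
  "lseed_prog ! 5 = LoadC 5 0"
  "lseed_prog ! 6 = Store 4 5"
  "lseed_prog ! 7 = LoadC 2 1"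
  "lseed_prog ! 8 = LoadC 3 0"
  "lseed_prog ! 9 = Sub 4 1 2"
  "lseed_prog ! 10 = Jz 4 28"
  "lseed_prog ! 11 = Add 4 2 8"
  "lseed_prog ! 12 = Load 5 4"
  "lseed_prog ! 13 = Add 4 3 8"
  "lseed_prog ! 14 = Load 6 4"
  "lseed_prog ! 15 = Sub 7 5 6"
  "lseed_prog ! 16 = Sub 4 6 5"
  "lseed_prog ! 17 = Add 7 7 4"
  "lseed_prog ! 18 = Jz 7 23"
  "lseed_prog ! 19 = Jz 3 24"
  "lseed_prog ! 20 = Add 4 1 3"
  "lseed_prog ! 21 = Load 3 4"
  "lseed_prog ! 22 = Jz 0 13"
  "lseed_prog ! 23 = Add 3 3 8"
  "lseed_prog ! 24 = Add 2 2 8"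
  "lseed_prog ! 25 = Add 4 1 2"
  "lseed_prog ! 26 = Store 4 3"
  "lseed_prog ! 27 = Jz 0 9"
  "lseed_prog ! 28 = LoadC 2 1"
  "lseed_prog ! 29 = Add 4 1 2"
  "lseed_prog ! 30 = Load 5 4"
  "lseed_prog ! 31 = Jz 5 34"
  "lseed_prog ! 32 = Sub 6 2 8"
  "lseed_prog ! 33 = Store 4 6"
  "lseed_prog ! 34 = Sub 6 1 2"
  "lseed_prog ! 35 = Jz 6 38"
  "lseed_prog ! 36 = Add 2 2 8"
  "lseed_prog ! 37 = Jz 0 29"
  "lseed_prog ! 38 = Halt"
  by (simp_all add: lseed_prog_def)

lemmas exec_simps = step_def halted_def lseed_prog_length lseed_prog_nth numeral_2_eq_2[symmetric]
  nat_diff_add_diff_eq_0_iff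

definition ram_frame :: "nat list \<Rightarrow> config \<Rightarrow> bool" where
  "ram_frame u c \<longleftrightarrow> regs c 0 = 0 \<and> regs c 1 = length u \<and> regs c 8 = 1 \<and> mem c 0 = length u
     \<and> (\<forall>j<length u. mem c (Suc j) = u!j)"

definition kmp_outer :: "nat list \<Rightarrow> config \<Rightarrow> nat \<Rightarrow> bool" where
  "kmp_outer u c i \<longleftrightarrow> pc c = 9 \<and> ram_frame u c \<and> regs c 2 = i \<and> 1 \<le> i \<and> i \<le> length u
     \<and> regs c 3 = longest_border u i
     \<and> (\<forall>j. 1 \<le> j \<and> j \<le> i \<longrightarrow> mem c (length u + j) = longest_border u j)"

definition kmp_inner :: "nat list \<Rightarrow> config \<Rightarrow> nat \<Rightarrow> nat \<Rightarrow> bool" where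
  "kmp_inner u c i k \<longleftrightarrow> pc c = 13 \<and> ram_frame u c \<and> regs c 2 = i \<and> 1 \<le> i \<and> i < length u
     \<and> regs c 3 = k \<and> regs c 5 = u!i \<and> kmp_candidate u i k
     \<and> (\<forall>j. 1 \<le> j \<and> j \<le> i \<longrightarrow> mem c (length u + j) = longest_border u j)"

definition lseed_pass :: "nat list \<Rightarrow> config \<Rightarrow> nat \<Rightarrow> bool" where
  "lseed_pass u c i \<longleftrightarrow> pc c = 29 \<and> regs c 0 = 0 \<and> regs c 1 = length u \<and> regs c 8 = 1
     \<and> regs c 2 = i \<and> 1 \<le> i \<and> i \<le> length u
     \<and> (\<forall>j. 1 \<le> j \<and> j < i \<longrightarrow> mem c (length u + j) = LSeed u j)
     \<and> (\<forall>j. i \<le> j \<and> j \<le> length u \<longrightarrow> mem c (length u + j) = longest_border u j)"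

lemma init_empty: "u = [] \<Longrightarrow> halted lseed_prog (run lseed_prog 3 (init_config u))"
  unfolding init_config_def by (simp only: run_unfold) (simp add: exec_simps)

lemma init_kmp_outer:
  assumes "u \<noteq> []"
  shows "kmp_outer u (run lseed_prog 9 (init_config u)) 1"
proof -
  have "longest_border u 1 = 0" using longest_border_less[of 1 u] by simp
  then show ?thesis using assms unfolding kmp_outer_def ram_frame_def init_config_def
    by (simp only: run_unfold) (auto simp: exec_simps le_Suc_eq Suc_le_eq)
qed

lemma kmp_outer_enter_inner:
  assumes "kmp_outer u c i" "i < length u"
  shows "kmp_inner u (run lseed_prog 4 c) i (longest_border u i)"
  using assms kmp_candidate_longest_border[of i u] unfolding kmp_inner_def kmp_outer_def ram_frame_def
  by (simp only: run_unfold) (auto simp: exec_simps)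

lemma kmp_outer_exit:
  assumes "kmp_outer u c (length u)"
  shows "lseed_pass u (run lseed_prog 3 c) 1"
  using assms unfolding kmp_outer_def ram_frame_def lseed_pass_def
  by (simp only: run_unfold) (auto simp: exec_simps)

lemma kmp_inner_less: "kmp_inner u c i k \<Longrightarrow> k < i"
  unfolding kmp_inner_def kmp_candidate_def is_border_def by auto

lemma kmp_inner_facts:
  assumes "kmp_inner u c i k"
  shows "pc c = 13" "regs c 0 = 0" "regs c 1 = length u" "regs c 8 = 1" "regs c 2 = i"
    "regs c 3 = k" "regs c 5 = u!i" "mem c (Suc k) = u!k"
    "0 < k \<Longrightarrow> mem c (length u + k) = longest_border u k"
  using assms kmp_inner_less[OF assms] unfolding kmp_inner_def ram_frame_def by auto

text \<open>The straight-line code paths are executed under hypotheses on the cells they read only,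
  which keeps the quantified invariants out of the simplifier.\<close>
lemma kmp_fallback_exec:
  assumes "pc c = 13" "regs c 0 = 0" "regs c 1 = n" "regs c 8 = 1" "regs c 2 = i"
    "regs c 3 = k" "regs c 5 = u!i" "mem c (Suc k) = u!k" "mem c (n + k) = k'" "0 < k" "u!k \<noteq> u!i"
  shows "pc (run lseed_prog 10 c) = 13 \<and> regs (run lseed_prog 10 c) 0 = 0
    \<and> regs (run lseed_prog 10 c) 1 = n \<and> regs (run lseed_prog 10 c) 8 = 1
    \<and> regs (run lseed_prog 10 c) 2 = i \<and> regs (run lseed_prog 10 c) 3 = k'
    \<and> regs (run lseed_prog 10 c) 5 = u!i \<and> mem (run lseed_prog 10 c) = mem c"
  using assms by (simp only: run_unfold) (simp add: exec_simps)

lemma kmp_match_exec: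
  assumes "pc c = 13" "regs c 0 = 0" "regs c 1 = n" "regs c 8 = 1" "regs c 2 = i"
    "regs c 3 = k" "regs c 5 = u!i" "mem c (Suc k) = u!k" "u!k = u!i"
  shows "pc (run lseed_prog 11 c) = 9 \<and> regs (run lseed_prog 11 c) 0 = 0
    \<and> regs (run lseed_prog 11 c) 1 = n \<and> regs (run lseed_prog 11 c) 8 = 1
    \<and> regs (run lseed_prog 11 c) 2 = Suc i \<and> regs (run lseed_prog 11 c) 3 = Suc k
    \<and> mem (run lseed_prog 11 c) = (mem c)(n + Suc i := Suc k)"
  using assms by (simp only: run_unfold) (simp add: exec_simps)

lemma kmp_mismatch_exec:
  assumes "pc c = 13" "regs c 0 = 0" "regs c 1 = n" "regs c 8 = 1" "regs c 2 = i"
    "regs c 3 = 0" "regs c 5 = u!i" "mem c (Suc 0) = u!0" "u!0 \<noteq> u!i"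
  shows "pc (run lseed_prog 11 c) = 9 \<and> regs (run lseed_prog 11 c) 0 = 0
    \<and> regs (run lseed_prog 11 c) 1 = n \<and> regs (run lseed_prog 11 c) 8 = 1
    \<and> regs (run lseed_prog 11 c) 2 = Suc i \<and> regs (run lseed_prog 11 c) 3 = 0
    \<and> mem (run lseed_prog 11 c) = (mem c)(n + Suc i := 0)"
  using assms by (simp only: run_unfold) (simp add: exec_simps)

lemma kmp_inner_fallback:
  assumes a: "kmp_inner u c i k" and "0 < k" and mismatch: "u!k \<noteq> u!i"
  shows "kmp_inner u (run lseed_prog 10 c) i (longest_border u k)"
  using kmp_fallback_exec[OF kmp_inner_facts(1-8)[OF a] kmp_inner_facts(9)[OF a \<open>0 < k\<close>]
      \<open>0 < k\<close> mismatch]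
    a kmp_candidate_fallback[OF _ \<open>0 < k\<close> mismatch]
  unfolding kmp_inner_def ram_frame_def by simp

lemma kmp_inner_match:
  assumes a: "kmp_inner u c i k" and match: "u!k = u!i"
  shows "kmp_outer u (run lseed_prog 11 c) (Suc i)"
proof -
  have "longest_border u (Suc i) = Suc k"
    using a longest_border_Suc_match[OF _ match] unfolding kmp_inner_def by simp
  then show ?thesis using kmp_match_exec[OF kmp_inner_facts(1-8)[OF a] match] a
    unfolding kmp_inner_def kmp_outer_def ram_frame_def by (auto simp: le_Suc_eq)
qed

lemma kmp_inner_mismatch:
  assumes a: "kmp_inner u c i 0" and mismatch: "u!0 \<noteq> u!i"
  shows "kmp_outer u (run lseed_prog 11 c) (Suc i)"
proof -
  have "longest_border u (Suc i) = 0"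
    using a longest_border_Suc_mismatch[OF _ mismatch] unfolding kmp_inner_def by simp
  then show ?thesis using kmp_mismatch_exec[OF kmp_inner_facts(1-8)[OF a] mismatch] a
    unfolding kmp_inner_def kmp_outer_def ram_frame_def by (auto simp: le_Suc_eq)
qed

lemma lseed_pass_facts:
  assumes "lseed_pass u c i"
  shows "pc c = 29" "regs c 0 = 0" "regs c 1 = length u" "regs c 8 = 1" "regs c 2 = i"
    "mem c (length u + i) = longest_border u i" "0 < i" "i \<le> length u"
  using assms unfolding lseed_pass_def by auto

lemma lseed_pass_unbordered_exec:
  assumes "pc c = 29" "regs c 0 = 0" "regs c 1 = n" "regs c 8 = 1" "regs c 2 = i" "mem c (n + i) = 0"
    "i < n"
  shows "pc (run lseed_prog 7 c) = 29 \<and> regs (run lseed_prog 7 c) 0 = 0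
    \<and> regs (run lseed_prog 7 c) 1 = n \<and> regs (run lseed_prog 7 c) 8 = 1
    \<and> regs (run lseed_prog 7 c) 2 = Suc i \<and> mem (run lseed_prog 7 c) = mem c"
  using assms by (simp only: run_unfold) (simp add: exec_simps)

lemma lseed_pass_bordered_exec:
  assumes "pc c = 29" "regs c 0 = 0" "regs c 1 = n" "regs c 8 = 1" "regs c 2 = i" "mem c (n + i) = b"
    "0 < b" "i < n"
  shows "pc (run lseed_prog 9 c) = 29 \<and> regs (run lseed_prog 9 c) 0 = 0
    \<and> regs (run lseed_prog 9 c) 1 = n \<and> regs (run lseed_prog 9 c) 8 = 1
    \<and> regs (run lseed_prog 9 c) 2 = Suc i \<and> mem (run lseed_prog 9 c) = (mem c)(n + i := i - 1)"
  using assms by (simp only: run_unfold) (simp add: exec_simps)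

lemma lseed_pass_last_unbordered_exec:
  assumes "pc c = 29" "regs c 1 = n" "regs c 8 = 1" "regs c 2 = n" "mem c (n + n) = 0"
  shows "pc (run lseed_prog 5 c) = 38 \<and> mem (run lseed_prog 5 c) = mem c"
  using assms by (simp only: run_unfold) (simp add: exec_simps)

lemma lseed_pass_last_bordered_exec:
  assumes "pc c = 29" "regs c 1 = n" "regs c 8 = 1" "regs c 2 = n" "mem c (n + n) = b" "0 < b"
  shows "pc (run lseed_prog 7 c) = 38 \<and> mem (run lseed_prog 7 c) = (mem c)(n + n := n - 1)"
  using assms by (simp only: run_unfold) (simp add: exec_simps)

lemma lseed_pass_step:
  assumes a: "lseed_pass u c i" and "i < length u"
  shows "\<exists>t \<le> 9. lseed_pass u (run lseed_prog t c) (Suc i)"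
proof -
  note f = lseed_pass_facts[OF a]
  have L: "LSeed u i = (if longest_border u i = 0 then 0 else i - 1)"
    using LSeed_eq_longest_border f(7,8) .
  show ?thesis
  proof (cases "longest_border u i = 0")
    case True
    then have "lseed_pass u (run lseed_prog 7 c) (Suc i)"
      using lseed_pass_unbordered_exec[OF f(1-5)] f(6) a \<open>i < length u\<close> L
      unfolding lseed_pass_def by (auto simp: less_Suc_eq)
    then show ?thesis by (intro exI[of _ 7]) simp
  next
    case False
    then have "lseed_pass u (run lseed_prog 9 c) (Suc i)"
      using lseed_pass_bordered_exec[OF f(1-6)] a \<open>i < length u\<close> L
      unfolding lseed_pass_def by (auto simp: less_Suc_eq)
    then show ?thesis by (intro exI[of _ 9]) simp
  qed
qed

lemma lseed_pass_last:
  assumes a: "lseed_pass u c (length u)"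
  shows "\<exists>t \<le> 7. halted lseed_prog (run lseed_prog t c)
    \<and> (\<forall>j \<in> {1..length u}. mem (run lseed_prog t c) (length u + j) = LSeed u j)"
proof -
  note f = lseed_pass_facts[OF a]
  have L: "LSeed u (length u) = (if longest_border u (length u) = 0 then 0 else length u - 1)"
    using LSeed_eq_longest_border f(7,8) .
  have halt: "halted lseed_prog c'" if "pc c' = 38" for c'
    using that by (simp add: halted_def lseed_prog_length lseed_prog_nth)
  show ?thesis
  proof (cases "longest_border u (length u) = 0")
    case True
    then show ?thesis using lseed_pass_last_unbordered_exec[OF f(1,3-5)] f(6) a L halt
      unfolding lseed_pass_def by (intro exI[of _ 5]) (auto simp: le_less)
  next
    case False
    then show ?thesis using lseed_pass_last_bordered_exec[OF f(1,3-6)] a L halt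
      unfolding lseed_pass_def by (intro exI[of _ 7]) (auto simp: le_less)
  qed
qed

text \<open>Amortisation: each fallback costs 10 steps and strictly shortens the candidate border,
  while the next longest border exceeds the final candidate by at most one.\<close>
lemma kmp_inner_loop:
  "kmp_inner u c i k \<Longrightarrow>
    \<exists>t. kmp_outer u (run lseed_prog t c) (Suc i) \<and> t + 10 * longest_border u (Suc i) \<le> 10 * k + 21"
proof (induction k arbitrary: c rule: less_induct)
  case (less k)
  have cand: "kmp_candidate u i k" using less.prems unfolding kmp_inner_def by simp
  consider "u!k = u!i" | "u!k \<noteq> u!i" "k = 0" | "u!k \<noteq> u!i" "0 < k" by auto
  then show ?case
  proof cases
    case 1
    then show ?thesis using kmp_inner_match[OF less.prems] longest_border_Suc_match[OF cand]
      by (intro exI[of _ 11]) simp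
  next
    case 2
    then show ?thesis using kmp_inner_mismatch[of u c i] longest_border_Suc_mismatch[of u i] less.prems cand
      by (intro exI[of _ 11]) simp
  next
    case 3
    have shorter: "longest_border u k < k" using longest_border_less \<open>0 < k\<close> .
    obtain t where t: "kmp_outer u (run lseed_prog t (run lseed_prog 10 c)) (Suc i)"
        "t + 10 * longest_border u (Suc i) \<le> 10 * longest_border u k + 21"
      using less.IH[OF shorter kmp_inner_fallback[OF less.prems 3(2,1)]] by blast
    moreover have "run lseed_prog (10 + t) c = run lseed_prog t (run lseed_prog 10 c)"
      by (rule run_add)
    ultimately show ?thesis using shorter by (intro exI[of _ "10 + t"]) simp
  qed
qed

lemma kmp_outer_loop:
  "kmp_outer u c i \<Longrightarrow>
    \<exists>t. lseed_pass u (run lseed_prog t c) 1 \<and> t \<le> 10 * longest_border u i + 25 * (length u - i) + 3"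
proof (induction "length u - i" arbitrary: c i)
  case 0
  then have "i = length u" unfolding kmp_outer_def by simp
  then show ?case using kmp_outer_exit 0(2) by (intro exI[of _ 3]) simp
next
  case (Suc m)
  have "i < length u" and m: "m = length u - Suc i" using Suc.hyps(2) by simp_all
  obtain t1 where t1: "kmp_outer u (run lseed_prog t1 (run lseed_prog 4 c)) (Suc i)"
      "t1 + 10 * longest_border u (Suc i) \<le> 10 * longest_border u i + 21"
    using kmp_inner_loop[OF kmp_outer_enter_inner[OF Suc.prems \<open>i < length u\<close>]] by blast
  obtain t2 where t2: "lseed_pass u (run lseed_prog t2 (run lseed_prog t1 (run lseed_prog 4 c))) 1"
      "t2 \<le> 10 * longest_border u (Suc i) + 25 * (length u - Suc i) + 3"
    using Suc.hyps(1)[OF m t1(1)] by blast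
  have "run lseed_prog (4 + t1 + t2) c = run lseed_prog t2 (run lseed_prog t1 (run lseed_prog 4 c))"
    by (simp add: run_add)
  then show ?case using t1(2) t2 \<open>i < length u\<close> by (intro exI[of _ "4 + t1 + t2"]) auto
qed

lemma lseed_pass_loop:
  "lseed_pass u c i \<Longrightarrow> \<exists>t \<le> 9 * (length u - i) + 7. halted lseed_prog (run lseed_prog t c)
     \<and> (\<forall>j \<in> {1..length u}. mem (run lseed_prog t c) (length u + j) = LSeed u j)"
proof (induction "length u - i" arbitrary: c i)
  case 0
  then have "i = length u" unfolding lseed_pass_def by simp
  then show ?case using lseed_pass_last[of u c] 0(2) by simp
next
  case (Suc m)
  have "i < length u" and m: "m = length u - Suc i" using Suc.hyps(2) by simp_all
  obtain t1 where "t1 \<le> 9" and t1: "lseed_pass u (run lseed_prog t1 c) (Suc i)"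
    using lseed_pass_step[OF Suc.prems \<open>i < length u\<close>] by blast
  obtain t2 where "t2 \<le> 9 * (length u - Suc i) + 7"
      and t2: "halted lseed_prog (run lseed_prog t2 (run lseed_prog t1 c))"
        "\<forall>j \<in> {1..length u}. mem (run lseed_prog t2 (run lseed_prog t1 c)) (length u + j) = LSeed u j"
    using Suc.hyps(1)[OF m t1] by blast
  then show ?case using \<open>t1 \<le> 9\<close> \<open>i < length u\<close> run_add[of lseed_prog t1 t2 c]
    by (intro exI[of _ "t1 + t2"]) auto
qed

theorem theorem3:
  fixes \<sigma> :: nat
  shows "\<exists>(P :: instr list) (C :: nat). \<forall>u :: nat list. set u \<subseteq> {..<\<sigma>} \<longrightarrow>
           (\<exists>k \<le> C * (length u + 1).
              halted P (run P k (init_config u)) \<and>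
              (\<forall>i \<in> {1..length u}. mem (run P k (init_config u)) (length u + i) = LSeed u i))"
proof (rule exI[of _ lseed_prog], rule exI[of _ 60], intro allI impI)
  \<comment> \<open>letters are compared with monus only\<close>
  fix u :: "nat list"
  show "\<exists>k \<le> 60 * (length u + 1). halted lseed_prog (run lseed_prog k (init_config u)) \<and>
      (\<forall>i \<in> {1..length u}. mem (run lseed_prog k (init_config u)) (length u + i) = LSeed u i)"
  proof (cases "u = []")
    case True
    then show ?thesis using init_empty by (intro exI[of _ 3]) simp
  next
    case False
    obtain t1 where t1: "lseed_pass u (run lseed_prog t1 (run lseed_prog 9 (init_config u))) 1"
        "t1 \<le> 25 * (length u - 1) + 3"
      using kmp_outer_loop[OF init_kmp_outer[OF False]] longest_border_less[of 1 u] by auto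
    obtain t2 where "t2 \<le> 9 * (length u - 1) + 7"
      and "halted lseed_prog (run lseed_prog t2 (run lseed_prog t1 (run lseed_prog 9 (init_config u))))"
        "\<forall>i \<in> {1..length u}.
           mem (run lseed_prog t2 (run lseed_prog t1 (run lseed_prog 9 (init_config u)))) (length u + i)
           = LSeed u i"
      using lseed_pass_loop[OF t1(1)] by blast
    moreover have "run lseed_prog t2 (run lseed_prog t1 (run lseed_prog 9 (init_config u)))
        = run lseed_prog (9 + t1 + t2) (init_config u)"
      by (simp add: run_add)
    ultimately show ?thesis using t1(2) by (intro exI[of _ "9 + t1 + t2"]) auto
  qed
qed

end
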